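(* Let $n,p \in \mathbb{N}$, $S_1,\dots,S_p \in \mathbb{N}^n\setminus\{0\}$, $C = \frac{1}{2}\cdot 1_{n\times 1}$, $\rho > 0$, $R = \sqrt{\rho^2 + \frac{n}{4}}$ and $C_i = C - \rho\cdot\frac{S_i}{\|S_i\|}$ for $i \in \{1,\dots,p\}$. For $x \in \{0,1\}^n$: (a) if $x$ satisfies $-\frac{\epsilon}{2} \le \frac{S_i^T}{\|S_i\|}(x - C) \le \frac{\epsilon}{2}$ for all $i \in \{1,\dots,p\}$, then $x$ satisfies $-\frac{\delta}{2} \le \|x - C_i\| - R \le \frac{\delta}{2}$ for all $i$, with $\delta = 2\left(\frac{\epsilon}{2} + \frac{n}{8\rho}\right)$; (b) conversely, if $x$ satisfies $-\frac{\delta}{2} \le \|x - C_i\| - R \le \frac{\delta}{2}$ for all $i \in \{1,\dots,p\}$, then $x$ satisfies $-\frac{\epsilon}{2} \le \frac{S_i^T}{\|S_i\|}(x - C) \le \frac{\epsilon}{2}$ for all $i$, with $\epsilon = 2\left(\frac{\delta}{2} + \frac{n}{8\rho}\right)$.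
   Context: $1_{n\times 1}$ denotes the all-ones vector in $\mathbb{R}^n$ and $\|\cdot\|$ the Euclidean norm. *)

theory Defs
  imports "HOL-Analysis.Analysis"
begin

definition ctr :: "real ^ 'n" where
  "ctr = (\<chi> j. 1 / 2)"

definition radius :: "real \<Rightarrow> 'n itself \<Rightarrow> real" where
  "radius \<rho> _ = sqrt (\<rho>\<^sup>2 + real CARD('n) / 4)"

definition ctr_i :: "real \<Rightarrow> real ^ 'n \<Rightarrow> real ^ 'n" where
  "ctr_i \<rho> s = ctr - \<rho> *\<^sub>R (inverse (norm s) *\<^sub>R s)"

definition binary_vec :: "real ^ 'n \<Rightarrow> bool" where
  "binary_vec x \<longleftrightarrow> (\<forall>j. x $ j \<in> {0, 1})"

definition nat_vec :: "real ^ 'n \<Rightarrow> bool" where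
  "nat_vec s \<longleftrightarrow> (\<forall>j. s $ j \<in> \<nat>)"

end

theory Submission
  imports Defs
begin

text \<open>Fix i and put y = x - C, u = S_i / \<parallel>S_i\<parallel>. For binary x every coordinate of y is
  \<plusminus>1/2, so \<parallel>y\<parallel>^2 = n/4 and \<parallel>x - C_i\<parallel>^2 = \<parallel>y + \<rho> u\<parallel>^2 = R^2 + 2\<rho> (u \<bullet> y). Linearising the
  square root, \<parallel>x - C_i\<parallel> - R differs from u \<bullet> y by at most \<parallel>y\<parallel>^2/(2\<rho>) = n/(8\<rho>), and both directions
  follow from the triangle inequality.\<close>

lemma sqrt_linearisation_le:
  fixes \<rho> R t :: real
  assumes "0 < \<rho>" "\<rho> \<le> R" "0 \<le> R\<^sup>2 + 2 * \<rho> * t"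
  shows "sqrt (R\<^sup>2 + 2 * \<rho> * t) \<le> R + t + (R\<^sup>2 - \<rho>\<^sup>2) / (2 * \<rho>)"
proof (cases "0 \<le> t")
  case True
  have "2 * \<rho> * t \<le> 2 * R * t"
    using assms True by (simp add: mult_right_mono)
  then have "R\<^sup>2 + 2 * \<rho> * t \<le> (R + t)\<^sup>2"
    unfolding power2_sum using zero_le_power2[of t] by linarith
  then have "sqrt (R\<^sup>2 + 2 * \<rho> * t) \<le> R + t"
    using assms True by (simp add: real_sqrt_le_iff')
  moreover have "0 \<le> (R\<^sup>2 - \<rho>\<^sup>2) / (2 * \<rho>)"
    using assms by (simp add: abs_le_square_iff power2_eq_square mult_mono)
  ultimately show ?thesis by linarith
next
  case False
  define d where "d = R - sqrt (R\<^sup>2 + 2 * \<rho> * t)"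
  have "sqrt (R\<^sup>2 + 2 * \<rho> * t) \<le> R"
    using assms False mult_pos_neg[of \<rho> t] by (simp add: real_sqrt_le_iff')
  then have "- 2 * \<rho> * t = d * (2 * R - d)"
    using assms by (simp add: d_def power2_eq_square algebra_simps)
  \<comment> \<open>d (2R - d) - 2\<rho> d is maximal at d = R - \<rho>, where it equals (R - \<rho>)^2 \<le> R^2 - \<rho>^2.\<close>
  also have "\<dots> \<le> 2 * \<rho> * d + (R\<^sup>2 - \<rho>\<^sup>2)"
  proof -
    have "(R - \<rho>)\<^sup>2 \<le> R\<^sup>2 - \<rho>\<^sup>2"
      using assms by (simp add: power2_eq_square algebra_simps)
    moreover have "d * (2 * R - d) - 2 * \<rho> * d = (R - \<rho>)\<^sup>2 - (d - (R - \<rho>))\<^sup>2"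
      by (simp add: power2_eq_square algebra_simps)
    ultimately show ?thesis by (smt (verit) zero_le_power2)
  qed
  finally have "- t \<le> d + (R\<^sup>2 - \<rho>\<^sup>2) / (2 * \<rho>)"
    using assms by (simp add: field_simps)
  then show ?thesis by (simp add: d_def)
qed

lemma norm_add_scaleR_unit_linearisation:
  fixes y u :: "'a::real_inner" and \<rho> :: real
  assumes "norm u = 1" "0 < \<rho>"
  shows "\<bar>norm (y + \<rho> *\<^sub>R u) - sqrt (\<rho>\<^sup>2 + (norm y)\<^sup>2) - u \<bullet> y\<bar> \<le> (norm y)\<^sup>2 / (2 * \<rho>)"
proof -
  define R where "R = sqrt (\<rho>\<^sup>2 + (norm y)\<^sup>2)"
  define k where "k = (norm y)\<^sup>2 / (2 * \<rho>)"
  have R2: "R\<^sup>2 = \<rho>\<^sup>2 + 2 * \<rho> * k"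
    using assms(2) by (simp add: R_def k_def)
  have "\<rho> \<le> R"
    using assms by (simp add: R_def real_le_rsqrt)
  have N2: "(norm (y + \<rho> *\<^sub>R u))\<^sup>2 = R\<^sup>2 + 2 * \<rho> * (u \<bullet> y)"
    using assms norm_eq_1[of u] unfolding R_def power2_norm_eq_inner
    by (simp add: inner_add_left inner_add_right inner_commute power2_eq_square algebra_simps)
  have "\<rho> + u \<bullet> y \<le> norm (y + \<rho> *\<^sub>R u)"
    using norm_cauchy_schwarz[of u "y + \<rho> *\<^sub>R u"] assms(1)
    by (simp add: inner_add_right power2_norm_eq_inner[symmetric])
  moreover have "R \<le> \<rho> + k"
  proof (rule power2_le_imp_le)
    show "R\<^sup>2 \<le> (\<rho> + k)\<^sup>2"
      unfolding R2 power2_sum using zero_le_power2[of k] by linarith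
    show "0 \<le> \<rho> + k"
      using assms(2) by (simp add: k_def)
  qed
  moreover have "norm (y + \<rho> *\<^sub>R u) \<le> R + u \<bullet> y + k"
  proof -
    have "norm (y + \<rho> *\<^sub>R u) = sqrt (R\<^sup>2 + 2 * \<rho> * (u \<bullet> y))"
      unfolding N2[symmetric] by simp
    also have "\<dots> \<le> R + u \<bullet> y + (R\<^sup>2 - \<rho>\<^sup>2) / (2 * \<rho>)"
      using sqrt_linearisation_le[OF assms(2) \<open>\<rho> \<le> R\<close>] N2 zero_le_power2 by metis
    finally show ?thesis
      using assms(2) by (simp add: R2)
  qed
  ultimately show ?thesis
    unfolding R_def[symmetric] k_def[symmetric] by linarith
qed

lemma norm_binary_vec_minus_ctr:
  fixes x :: "real ^ 'n"
  assumes "binary_vec x"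
  shows "(norm (x - ctr))\<^sup>2 = real CARD('n) / 4"
proof -
  have coordinate: "((x - ctr) $ j)\<^sup>2 = 1 / 4" for j
    using assms unfolding binary_vec_def ctr_def by (cases "x $ j = 0") (auto simp: power2_eq_square)
  have "(norm (x - ctr))\<^sup>2 = (\<Sum>j\<in>UNIV. ((x - ctr) $ j)\<^sup>2)"
    by (simp add: norm_vec_def L2_set_def sum_nonneg)
  also have "\<dots> = real CARD('n) / 4"
    by (simp only: coordinate) simp
  finally show ?thesis .
qed

lemma dist_ctr_i_linearisation:
  fixes x s :: "real ^ 'n" and \<rho> :: real
  assumes "binary_vec x" "s \<noteq> 0" "0 < \<rho>"
  shows "\<bar>norm (x - ctr_i \<rho> s) - radius \<rho> TYPE('n) - (inverse (norm s) *\<^sub>R s) \<bullet> (x - ctr)\<bar>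
           \<le> real CARD('n) / (8 * \<rho>)"
proof -
  have "norm (inverse (norm s) *\<^sub>R s) = 1"
    using assms(2) by simp
  from norm_add_scaleR_unit_linearisation[OF this assms(3), of "x - ctr"]
  show ?thesis
    using norm_binary_vec_minus_ctr[OF assms(1)]
    by (simp add: ctr_i_def radius_def algebra_simps)
qed

theorem lemma4p1:
  fixes S :: "nat \<Rightarrow> real ^ 'n" and p :: nat and \<rho> :: real
  assumes S_nat: "\<forall>i\<in>{1..p}. nat_vec (S i) \<and> S i \<noteq> 0"
    and rho_pos: "\<rho> > 0"
  shows
    "(\<forall>(\<epsilon>::real) (x::real ^ 'n).
        binary_vec x \<and>
        (\<forall>i\<in>{1..p}. - \<epsilon> / 2 \<le> (inverse (norm (S i)) *\<^sub>R S i) \<bullet> (x - ctr)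
                     \<and> (inverse (norm (S i)) *\<^sub>R S i) \<bullet> (x - ctr) \<le> \<epsilon> / 2)
        \<longrightarrow> (let \<delta> = 2 * (\<epsilon> / 2 + real CARD('n) / (8 * \<rho>)) in
             \<forall>i\<in>{1..p}. - \<delta> / 2 \<le> norm (x - ctr_i \<rho> (S i)) - radius \<rho> TYPE('n)
                        \<and> norm (x - ctr_i \<rho> (S i)) - radius \<rho> TYPE('n) \<le> \<delta> / 2))
     \<and>
     (\<forall>(\<delta>::real) (x::real ^ 'n).
        binary_vec x \<and>
        (\<forall>i\<in>{1..p}. - \<delta> / 2 \<le> norm (x - ctr_i \<rho> (S i)) - radius \<rho> TYPE('n)
                     \<and> norm (x - ctr_i \<rho> (S i)) - radius \<rho> TYPE('n) \<le> \<delta> / 2)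
        \<longrightarrow> (let \<epsilon> = 2 * (\<delta> / 2 + real CARD('n) / (8 * \<rho>)) in
             \<forall>i\<in>{1..p}. - \<epsilon> / 2 \<le> (inverse (norm (S i)) *\<^sub>R S i) \<bullet> (x - ctr)
                        \<and> (inverse (norm (S i)) *\<^sub>R S i) \<bullet> (x - ctr) \<le> \<epsilon> / 2))"
proof -
  have approx: "\<bar>norm (x - ctr_i \<rho> (S i)) - radius \<rho> TYPE('n)
                   - (inverse (norm (S i)) *\<^sub>R S i) \<bullet> (x - ctr)\<bar> \<le> real CARD('n) / (8 * \<rho>)"
    if "binary_vec x" "i \<in> {1..p}" for x i
    using dist_ctr_i_linearisation[OF that(1) _ rho_pos] S_nat that(2) by blast
  show ?thesis
    unfolding Let_def
    by (intro conjI allI impI ballI; elim conjE; drule (1) bspec; use approx in \<open>force simp: abs_le_iff\<close>)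
qed

end
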